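(* Let $w(x,y)=x^{a_1}y^{b_1}\cdots x^{a_k}y^{b_k}\in F_2$ with $k\ge1$ and all integers $a_i\neq0$, $b_i\neq0$. If all $b_i$ are negative, then either the word map $w:\mathrm{SL}(2,\mathbb{C})^2\to\mathrm{SL}(2,\mathbb{C})$ is surjective, or $w=v^2$ for some word $v\neq\mathrm{id}$.
   Context: The word map sends $(X,Y)$ to $X^{a_1}Y^{b_1}\cdots X^{a_k}Y^{b_k}$. *)

theory Defs
  imports "HOL-Analysis.Analysis"
begin

text \<open>The free group F_2 on generators x, y, realised as words modulo free reduction.
  A letter is a pair (g, e): g = True means the generator x, g = False means y;
  e = True means the inverse of that generator.\<close>

type_synonym letter = "bool \<times> bool"

inductive free_step :: "letter list \<Rightarrow> letter list \<Rightarrow> bool" where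
  cancel: "free_step (u @ [(g, e), (g, \<not> e)] @ v) (u @ v)"

definition free_eq :: "letter list \<Rightarrow> letter list \<Rightarrow> bool" where
  "free_eq w v \<longleftrightarrow> equivclp free_step w v"

definition gen_pow :: "bool \<Rightarrow> int \<Rightarrow> letter list" where
  "gen_pow g n = replicate (nat \<bar>n\<bar>) (g, n < 0)"

definition xy_word :: "nat \<Rightarrow> (nat \<Rightarrow> int) \<Rightarrow> (nat \<Rightarrow> int) \<Rightarrow> letter list" where
  "xy_word k a b = concat (map (\<lambda>i. gen_pow True (a i) @ gen_pow False (b i)) [1..<k+1])"

definition SL2C :: "(complex^2^2) set" where
  "SL2C = {A. det A = 1}"

definition letter_mat :: "complex^2^2 \<Rightarrow> complex^2^2 \<Rightarrow> letter \<Rightarrow> complex^2^2" where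
  "letter_mat X Y l = (let M = (if fst l then X else Y) in if snd l then matrix_inv M else M)"

definition word_map :: "letter list \<Rightarrow> complex^2^2 \<Rightarrow> complex^2^2 \<Rightarrow> complex^2^2" where
  "word_map w X Y = foldr (\<lambda>l M. letter_mat X Y l ** M) w (mat 1)"

definition word_map_surjective_SL2C :: "letter list \<Rightarrow> bool" where
  "word_map_surjective_SL2C w \<longleftrightarrow>
     (\<forall>g\<in>SL2C. \<exists>X\<in>SL2C. \<exists>Y\<in>SL2C. word_map w X Y = g)"

end

theory Submission
  imports Defs "HOL-Computational_Algebra.Polynomial"
begin

text \<open>Since every b_i is negative, w is a product x^d_1 y^-1 ... x^d_L y^-1.
  At X = [[s, 0], [0, 1/s]] and Y = [[t, v], [0, 1/t]] it evaluates to an upper triangular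
  matrix with diagonal entry s^S t^-L, where S = d_1 + ... + d_L, and corner entry v times a
  Laurent polynomial in s and t. Where that polynomial is nonzero, v can be chosen to reach every
  upper triangular matrix with this diagonal, and every element of SL(2,C) is conjugate to an
  upper triangular one. For s = 1 the polynomial is a geometric sum, which can be kept nonzero
  unless the diagonal entry is -1 and L is even. In that case take s = 2: if the polynomial
  vanished at every admissible t, comparing coefficients would show that the partial sums of
  d over its two halves agree, i.e. w = v^2.\<close>

lemma matrix_inv_unique:
  fixes A B :: "'a::semiring_1^'n^'n"
  assumes "A ** B = mat 1" "B ** A = mat 1"
  shows "matrix_inv A = B"
proof -
  have "A ** matrix_inv A = mat 1 \<and> matrix_inv A ** A = mat 1"
    unfolding matrix_inv_def by (rule someI[of _ B]) (use assms in auto)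
  then show ?thesis by (metis assms matrix_mul_assoc matrix_mul_rid)
qed

lemma matrix_mul_inv:
  fixes A :: "'a::semiring_1^'n^'n"
  assumes "invertible A"
  shows "A ** matrix_inv A = mat 1" "matrix_inv A ** A = mat 1"
  using someI_ex[OF assms[unfolded invertible_def]] by (simp_all add: matrix_inv_def)

lemma matrix_inv_conj:
  fixes P Q X :: "'a::semiring_1^'n^'n"
  assumes PQ: "P ** Q = mat 1" "Q ** P = mat 1" and X: "invertible X"
  shows "matrix_inv (P ** X ** Q) = P ** matrix_inv X ** Q"
proof (rule matrix_inv_unique)
  have QP: "Q ** (P ** B) = B" for B :: "'a^'n^'n"
    by (metis PQ(2) matrix_mul_assoc matrix_mul_lid)
  have XX: "X ** (matrix_inv X ** B) = B" "matrix_inv X ** (X ** B) = B" for B :: "'a^'n^'n"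
    by (metis X matrix_mul_inv(1) matrix_mul_assoc matrix_mul_lid)
      (metis X matrix_mul_inv(2) matrix_mul_assoc matrix_mul_lid)
  show "P ** X ** Q ** (P ** matrix_inv X ** Q) = mat 1"
    by (simp add: QP XX PQ(1) flip: matrix_mul_assoc)
  show "P ** matrix_inv X ** Q ** (P ** X ** Q) = mat 1"
    by (simp add: QP XX PQ(1) flip: matrix_mul_assoc)
qed

lemma det_conj:
  fixes P Q X :: "'a::comm_ring_1^'n^'n"
  assumes "P ** Q = mat 1"
  shows "det (P ** X ** Q) = det X"
proof -
  have "det P * det Q = 1" using assms det_mul[of P Q] by simp
  moreover have "det (P ** X ** Q) = det X * (det P * det Q)" by (simp add: det_mul ac_simps)
  ultimately show ?thesis by simp
qed

lemma invertible_SL2C: "X \<in> SL2C \<Longrightarrow> invertible X"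
  by (simp add: SL2C_def invertible_det_nz)

lemma word_map_Nil: "word_map [] X Y = mat 1"
  by (simp add: word_map_def)

lemma word_map_Cons: "word_map (l # w) X Y = letter_mat X Y l ** word_map w X Y"
  by (simp add: word_map_def)

lemma word_map_conj:
  fixes P Q X Y :: "complex^2^2"
  assumes PQ: "P ** Q = mat 1" "Q ** P = mat 1" and "invertible X" "invertible Y"
  shows "word_map w (P ** X ** Q) (P ** Y ** Q) = P ** word_map w X Y ** Q"
proof (induction w)
  case Nil
  then show ?case by (simp add: word_map_Nil matrix_mul_assoc PQ(1))
next
  case (Cons l w)
  have QP: "Q ** (P ** B) = B" for B :: "complex^2^2"
    by (metis PQ(2) matrix_mul_assoc matrix_mul_lid)
  have "letter_mat (P ** X ** Q) (P ** Y ** Q) l = P ** letter_mat X Y l ** Q"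
    using assms by (cases l) (auto simp: letter_mat_def matrix_inv_conj)
  then show ?case unfolding word_map_Cons Cons by (simp add: QP flip: matrix_mul_assoc)
qed

definition mat2 :: "'a::zero \<Rightarrow> 'a \<Rightarrow> 'a \<Rightarrow> 'a \<Rightarrow> 'a^2^2" where
  "mat2 p q r s = (\<chi> i j. if i = 1 then (if j = 1 then p else q) else (if j = 1 then r else s))"

lemma mat2_nth [simp]:
  "mat2 p q r s $ 1 $ 1 = p" "mat2 p q r s $ 1 $ 2 = q"
  "mat2 p q r s $ 2 $ 1 = r" "mat2 p q r s $ 2 $ 2 = s"
  by (simp_all add: mat2_def)

lemma mat2_eta: "A = mat2 (A$1$1) (A$1$2) (A$2$1) (A$2$2)"
  by (simp add: vec_eq_iff forall_2)

lemma mat2_eq_iff: "mat2 p q r s = mat2 p2 q2 r2 s2 \<longleftrightarrow> p = p2 \<and> q = q2 \<and> r = r2 \<and> s = s2"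
  by (auto simp: vec_eq_iff forall_2)

lemma mat2_mult:
  "mat2 p q r s ** mat2 p2 q2 r2 s2
    = mat2 (p * p2 + q * r2) (p * q2 + q * s2) (r * p2 + s * r2) (r * q2 + s * s2)"
  by (simp add: vec_eq_iff forall_2 matrix_matrix_mult_def sum_2)

lemma mat1_eq_mat2: "mat 1 = mat2 1 0 0 1"
  by (simp add: vec_eq_iff forall_2 mat_def)

lemma det_mat2: "det (mat2 p q r s) = p * s - q * r"
  by (simp add: det_2)

definition upper_tri :: "'a::field \<Rightarrow> 'a \<Rightarrow> 'a^2^2" where
  "upper_tri d e = mat2 d e 0 (inverse d)"

lemma upper_tri_mult: "upper_tri d e ** upper_tri d2 e2 = upper_tri (d*d2) (d*e2 + e * inverse d2)"
  by (simp add: upper_tri_def mat2_mult mat2_eq_iff)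

lemma mat1_eq_upper_tri: "mat 1 = upper_tri 1 0"
  by (simp add: upper_tri_def mat1_eq_mat2)

lemma det_upper_tri: "d \<noteq> 0 \<Longrightarrow> det (upper_tri d e) = 1"
  by (simp add: upper_tri_def det_mat2)

lemma matrix_inv_upper_tri: "d \<noteq> 0 \<Longrightarrow> matrix_inv (upper_tri d e) = upper_tri (inverse d) (- e)"
  by (rule matrix_inv_unique) (simp_all add: upper_tri_mult mat1_eq_upper_tri)

lemma SL2C_conj_upper_tri:
  assumes "g \<in> SL2C"
  obtains P Q lam c where "P ** Q = mat 1" "Q ** P = mat 1" "lam \<noteq> 0"
    "g = P ** upper_tri lam c ** Q"
proof -
  obtain p q r z where g: "g = mat2 p q r z" using mat2_eta by blast
  have det: "p * z - q * r = 1" using assms by (simp add: g SL2C_def det_mat2)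
  show thesis
  proof (cases "r = 0")
    case True
    with det have "p \<noteq> 0" "z = inverse p" by (auto simp: inverse_unique)
    with True have "g = upper_tri p q" by (simp add: g upper_tri_def)
    with \<open>p \<noteq> 0\<close> show thesis by (intro that[of "mat 1" "mat 1"]) auto
  next
    case False
    obtain l where l: "l^2 - (p + z) * l + 1 = 0"
    proof
      define D where "D = csqrt ((p + z)^2 - 4)"
      have "D^2 = (p + z)^2 - 4" by (simp add: D_def)
      then show "((p + z + D) / 2)^2 - (p + z) * ((p + z + D) / 2) + 1 = 0"
        by (simp add: field_simps power2_eq_square) algebra
    qed
    then have "l \<noteq> 0" by auto
    \<comment> \<open>l is an eigenvalue of g, and the first column of P is an eigenvector for it.\<close>
    define P where "P = mat2 (l - z) 1 r 0"
    define Q where "Q = mat2 0 (1 / r) 1 (- (l - z) / r)"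
    have PQ: "P ** Q = mat 1" "Q ** P = mat 1"
      using False by (auto simp: P_def Q_def mat2_mult mat1_eq_mat2 mat2_eq_iff field_simps)
    have "P ** upper_tri l 1 ** Q = g"
      using False \<open>l \<noteq> 0\<close> l det
      by (simp add: P_def Q_def g upper_tri_def mat2_mult mat2_eq_iff field_simps power2_eq_square)
        algebra
    with PQ \<open>l \<noteq> 0\<close> show thesis by (intro that[of P Q]) auto
  qed
qed

lemma word_map_surjective_if_hits_upper_tri:
  assumes "\<And>lam c. lam \<noteq> 0 \<Longrightarrow> \<exists>X\<in>SL2C. \<exists>Y\<in>SL2C. word_map w X Y = upper_tri lam c"
  shows "word_map_surjective_SL2C w"
  unfolding word_map_surjective_SL2C_def
proof
  fix g assume "g \<in> SL2C"
  then obtain P Q lam c where PQ: "P ** Q = mat 1" "Q ** P = mat 1"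
    and "lam \<noteq> 0" and g: "g = P ** upper_tri lam c ** Q"
    by (rule SL2C_conj_upper_tri)
  then obtain X Y where XY: "X \<in> SL2C" "Y \<in> SL2C" "word_map w X Y = upper_tri lam c"
    using assms by blast
  have "word_map w (P ** X ** Q) (P ** Y ** Q) = g"
    using word_map_conj[OF PQ] XY g by (simp add: invertible_SL2C)
  moreover have "P ** X ** Q \<in> SL2C" "P ** Y ** Q \<in> SL2C"
    using XY det_conj[OF PQ(1)] by (auto simp: SL2C_def)
  ultimately show "\<exists>X\<in>SL2C. \<exists>Y\<in>SL2C. word_map w X Y = g" by blast
qed

definition letter_diag :: "complex \<Rightarrow> complex \<Rightarrow> letter \<Rightarrow> complex" where
  "letter_diag s t l = (let d = if fst l then s else t in if snd l then inverse d else d)"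

definition letter_corner :: "letter \<Rightarrow> complex" where
  "letter_corner l = (if fst l then 0 else if snd l then -1 else 1)"

fun word_diag :: "complex \<Rightarrow> complex \<Rightarrow> letter list \<Rightarrow> complex" where
  "word_diag s t [] = 1"
| "word_diag s t (l # w) = letter_diag s t l * word_diag s t w"

fun word_corner :: "complex \<Rightarrow> complex \<Rightarrow> letter list \<Rightarrow> complex" where
  "word_corner s t [] = 0"
| "word_corner s t (l # w) =
     letter_diag s t l * word_corner s t w + letter_corner l * inverse (word_diag s t w)"

lemma word_map_upper_tri:
  assumes "s \<noteq> 0" "t \<noteq> 0"
  shows "word_map w (upper_tri s 0) (upper_tri t v)
    = upper_tri (word_diag s t w) (v * word_corner s t w)"
proof (induction w)
  case Nil
  then show ?case by (simp add: word_map_Nil mat1_eq_upper_tri)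
next
  case (Cons l w)
  have "letter_mat (upper_tri s 0) (upper_tri t v) l = upper_tri (letter_diag s t l) (v * letter_corner l)"
    using assms by (cases l) (auto simp: letter_mat_def letter_diag_def letter_corner_def matrix_inv_upper_tri)
  with Cons show ?case by (simp add: word_map_Cons upper_tri_mult algebra_simps)
qed

lemma word_diag_append: "word_diag s t (w1 @ w2) = word_diag s t w1 * word_diag s t w2"
  by (induction w1) auto

lemma word_corner_append:
  "word_corner s t (w1 @ w2)
    = word_diag s t w1 * word_corner s t w2 + word_corner s t w1 * inverse (word_diag s t w2)"
  by (induction w1) (auto simp: word_diag_append algebra_simps)

lemma word_diag_gen_pow_x: "word_diag s t (gen_pow True d) = s powi d"
proof -
  have "word_diag s t (replicate n l) = letter_diag s t l ^ n" for n l
    by (induction n) auto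
  then show ?thesis by (auto simp: gen_pow_def letter_diag_def power_int_def)
qed

lemma word_corner_gen_pow_x: "word_corner s t (gen_pow True d) = 0"
proof -
  have "word_corner s t (replicate n (True, e)) = 0" for n e
    by (induction n) (auto simp: letter_corner_def)
  then show ?thesis by (simp add: gen_pow_def)
qed

definition xy_inv_word :: "int list \<Rightarrow> letter list" where
  "xy_inv_word ds = concat (map (\<lambda>d. gen_pow True d @ [(False, True)]) ds)"

lemma xy_inv_word_append: "xy_inv_word (ds @ es) = xy_inv_word ds @ xy_inv_word es"
  by (simp add: xy_inv_word_def)

lemma word_diag_xy_inv_word:
  assumes "s \<noteq> 0"
  shows "word_diag s t (xy_inv_word ds) = s powi sum_list ds * inverse t ^ length ds"
  using assms
  by (induction ds)
    (simp_all add: xy_inv_word_def word_diag_append word_diag_gen_pow_x letter_diag_def power_int_add)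

definition corner_poly :: "complex \<Rightarrow> complex \<Rightarrow> int list \<Rightarrow> complex" where
  "corner_poly s u ds = (\<Sum>j<length ds. s powi (2 * sum_list (take (Suc j) ds)) * u ^ (2 * j))"

lemma word_corner_xy_inv_word:
  assumes "s \<noteq> 0" "t \<noteq> 0"
  shows "word_corner s t (xy_inv_word ds) * word_diag s t (xy_inv_word ds)
    = - inverse t * corner_poly s (inverse t) ds"
proof (induction ds rule: rev_induct)
  case Nil
  then show ?case by (simp add: xy_inv_word_def corner_poly_def)
next
  case (snoc d ds)
  let ?u = "inverse t" and ?q = "s powi d"
  let ?D = "word_diag s t (xy_inv_word ds)" and ?E = "word_corner s t (xy_inv_word ds)"
  have D: "?D = s powi sum_list ds * ?u ^ length ds"
    by (rule word_diag_xy_inv_word[OF assms(1)])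
  have sq: "s powi (2 * a) = (s powi a)^2" for a
    using power_int_power'[of s a 2] by (simp add: mult.commute)
  have F: "corner_poly s ?u (ds @ [d]) = corner_poly s ?u ds + (?D * ?q)^2"
    using assms
    by (simp add: corner_poly_def D sq power_int_add power_mult_distrib power_mult power2_eq_square)
  have diag: "word_diag s t (xy_inv_word (ds @ [d])) = ?D * (?q * ?u)"
    by (simp add: xy_inv_word_def word_diag_append word_diag_gen_pow_x letter_diag_def)
  have corner: "word_corner s t (xy_inv_word (ds @ [d])) = - (?D * ?q) + ?E * inverse (?q * ?u)"
    by (simp add: xy_inv_word_def word_corner_append word_diag_append word_corner_gen_pow_x
        word_diag_gen_pow_x letter_diag_def letter_corner_def)
  have "(- (?D * ?q) + ?E * inverse (?q * ?u)) * (?D * (?q * ?u))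
      = - ?u * (?D * ?q)^2 + (?E * ?D) * (inverse (?q * ?u) * (?q * ?u))"
    by (simp add: algebra_simps power2_eq_square)
  also have "\<dots> = - ?u * (?D * ?q)^2 + - ?u * corner_poly s ?u ds"
  proof -
    have "inverse (?q * ?u) * (?q * ?u) = 1" by (rule left_inverse) (use assms in simp)
    then show ?thesis by (simp only: snoc mult_1_right)
  qed
  also have "\<dots> = - ?u * corner_poly s ?u (ds @ [d])"
    by (simp add: F distrib_left)
  finally show ?case by (simp only: diag corner)
qed

lemma sum_lessThan_add: "(\<Sum>j<n + (m::nat). f j) = (\<Sum>j<n. f j) + (\<Sum>j<m. f (j + n))"
  by (induction m) (simp_all add: ac_simps)

lemma coeff_zero_if_vanishes_on_nth_roots:
  fixes \<beta> :: "nat \<Rightarrow> complex"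
  assumes "n > 0" "\<mu> \<noteq> 0"
    and vanish: "\<And>z. z ^ n = \<mu> \<Longrightarrow> (\<Sum>j<n. \<beta> j * z ^ j) = 0"
    and "i < n"
  shows "\<beta> i = 0"
proof -
  define q where "q = (\<Sum>j<n. monom (\<beta> j) j)"
  have coeff_q: "coeff q i = (if i < n then \<beta> i else 0)" for i
    unfolding q_def coeff_sum by auto
  have "q = 0"
  proof (rule ccontr)
    assume "q \<noteq> 0"
    have "degree q < n"
      using \<open>n > 0\<close> by (intro degree_lessI) (auto simp: \<open>q \<noteq> 0\<close> coeff_q)
    have "{z. z ^ n = \<mu>} \<subseteq> {z. poly q z = 0}"
      using vanish by (auto simp: q_def poly_sum poly_monom)
    then have "card {z. z ^ n = \<mu>} \<le> card {z. poly q z = 0}"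
      by (intro card_mono poly_roots_finite \<open>q \<noteq> 0\<close>)
    also have "\<dots> \<le> degree q" by (rule card_poly_roots_bound[OF \<open>q \<noteq> 0\<close>])
    finally show False using card_nth_roots[OF assms(2,1)] \<open>degree q < n\<close> by linarith
  qed
  then show ?thesis using coeff_q[of i] \<open>i < n\<close> by simp
qed

lemma two_power_int_inject: "(2::complex) powi a = 2 powi b \<Longrightarrow> a = b"
proof -
  assume "(2::complex) powi a = 2 powi b"
  then have "of_real ((2::real) powi a) = (of_real (2 powi b) :: complex)" by simp
  then have "(2::real) powi a = 2 powi b" by (simp only: of_real_eq_iff)
  then show "a = b"
    using power_int_strict_increasing[of a b "2::real"] power_int_strict_increasing[of b a "2::real"]
    by (cases a b rule: linorder_cases) auto
qed

lemma list_eq_if_prefix_sums_eq: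
  fixes xs ys :: "'a::ab_group_add list"
  assumes "length xs = length ys"
    and "\<And>j. j \<le> length xs \<Longrightarrow> sum_list (take j xs) = sum_list (take j ys)"
  shows "xs = ys"
proof (rule nth_equalityI)
  fix i assume "i < length xs"
  then have "sum_list (take i xs) + xs ! i = sum_list (take i ys) + ys ! i"
    using assms assms(2)[of "Suc i"] by (simp add: take_Suc_conv_app_nth)
  then show "xs ! i = ys ! i" using assms(2)[of i] \<open>i < length xs\<close> by simp
qed (fact assms(1))

lemma square_if_prefix_sums_shift:
  fixes ds :: "int list"
  assumes "length ds = n + n"
    and shift: "\<And>m. 0 < m \<Longrightarrow> m \<le> n \<Longrightarrow>
      2 * sum_list (take (m + n) ds) = 2 * sum_list (take m ds) + sum_list ds"
  shows "ds = take n ds @ take n ds"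
proof -
  have half: "2 * sum_list (take n ds) = sum_list ds"
  proof (cases "n = 0")
    case True then show ?thesis using assms(1) by simp
  next
    case False then show ?thesis using shift[of n] assms(1) by simp
  qed
  have "drop n ds = take n ds"
  proof (rule list_eq_if_prefix_sums_eq)
    fix m assume "m \<le> length (drop n ds)"
    then have "m \<le> n" using assms(1) by simp
    have "sum_list (take (n + m) ds) = sum_list (take n ds) + sum_list (take m (drop n ds))"
      by (simp add: take_add)
    then show "sum_list (take m (drop n ds)) = sum_list (take m (take n ds))"
      using shift[of m] half \<open>m \<le> n\<close> by (cases "m = 0") (auto simp: add.commute)
  qed (use assms(1) in simp)
  then show ?thesis by (metis append_take_drop_id)
qed

lemma square_if_corner_poly_vanishes:
  fixes ds :: "int list"
  assumes L: "length ds = n + n" and "n > 0"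
    and vanish: "\<And>u. u \<noteq> 0 \<Longrightarrow> 2 powi sum_list ds * u ^ length ds = -1 \<Longrightarrow>
      corner_poly 2 u ds = 0"
  shows "ds = take n ds @ take n ds"
proof -
  define P where "P j = sum_list (take j ds)" for j
  define \<mu> :: complex where "\<mu> = - inverse (2 powi sum_list ds)"
  \<comment> \<open>For admissible u, z = u^2 is an n-th root of \<mu> and corner_poly 2 u ds folds to
    \<Sum>j<n. \<beta> j * z^j.\<close>
  define \<beta> where "\<beta> j = 2 powi (2 * P (Suc j)) + \<mu> * 2 powi (2 * P (Suc j + n))" for j
  have vanish_on_roots: "(\<Sum>j<n. \<beta> j * z ^ j) = 0" if z: "z ^ n = \<mu>" for z
  proof -
    obtain u where u: "u ^ 2 = z" using exists_complex_root[of 2 z] by (metis zero_neq_numeral)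
    have u_power: "u ^ (2 * j) = z ^ j" for j by (simp add: power_mult u)
    have "u \<noteq> 0" using z u \<open>n > 0\<close> by (auto simp: \<mu>_def power_0_left)
    moreover have "u ^ length ds = \<mu>" using L z by (simp add: u_power[symmetric] mult_2)
    ultimately have "corner_poly 2 u ds = 0" by (intro vanish) (simp_all add: \<mu>_def)
    moreover have "corner_poly 2 u ds = (\<Sum>j<n. \<beta> j * z ^ j)"
      unfolding corner_poly_def L sum_lessThan_add
      by (simp only: distrib_left power_add u_power z) (simp add: \<beta>_def P_def sum.distrib algebra_simps)
    ultimately show ?thesis by simp
  qed
  have \<beta>_zero: "\<beta> j = 0" if "j < n" for j
    by (rule coeff_zero_if_vanishes_on_nth_roots[of n \<mu>, OF \<open>n > 0\<close> _ vanish_on_roots that])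
      (simp add: \<mu>_def)
  have "2 * P (m + n) = 2 * P m + sum_list ds" if "0 < m" "m \<le> n" for m
  proof -
    obtain j where m: "m = Suc j" and "j < n" using \<open>0 < m\<close> \<open>m \<le> n\<close> by (cases m) auto
    then have "(2::complex) powi (2 * P m) = inverse (2 powi sum_list ds) * 2 powi (2 * P (m + n))"
      using \<beta>_zero[OF \<open>j < n\<close>] by (simp add: \<beta>_def \<mu>_def add_eq_0_iff)
    also have "\<dots> = 2 powi (2 * P (m + n) - sum_list ds)"
      by (simp add: power_int_diff field_simps)
    finally show ?thesis by (auto dest: two_power_int_inject)
  qed
  then show ?thesis by (intro square_if_prefix_sums_shift L) (simp add: P_def)
qed

lemma corner_poly_1: "corner_poly 1 u ds = (\<Sum>j<length ds. (u^2) ^ j)"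
  by (simp add: corner_poly_def power_mult)

lemma exists_root_corner_poly_1_nonzero:
  assumes "ds \<noteq> []" "lam \<noteq> 0" "\<not> (lam = -1 \<and> even (length ds))"
  shows "\<exists>u. u ^ length ds = lam \<and> corner_poly 1 u ds \<noteq> 0"
proof (cases "lam^2 = 1")
  case True
  then have "lam ^ length ds = lam" using assms(3) by (auto simp: power2_eq_1_iff)
  moreover have "corner_poly 1 lam ds \<noteq> 0" using True assms(1) by (simp add: corner_poly_1)
  ultimately show ?thesis by blast
next
  case False
  obtain u where u: "u ^ length ds = lam"
    using exists_complex_root[of "length ds" lam] assms(1) by (metis length_0_conv)
  have "(1 - u^2) * corner_poly 1 u ds = 1 - (u^2) ^ length ds"
    unfolding corner_poly_1 by (rule one_diff_power_eq[symmetric])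
  also have "\<dots> = 1 - lam^2" by (metis u power_mult mult.commute)
  finally have "(1 - u^2) * corner_poly 1 u ds \<noteq> 0" using False by simp
  then show ?thesis using u by auto
qed

lemma xy_inv_word_hits_upper_tri:
  assumes "s \<noteq> 0" "u \<noteq> 0" "corner_poly s u ds \<noteq> 0"
  shows "\<exists>X\<in>SL2C. \<exists>Y\<in>SL2C.
    word_map (xy_inv_word ds) X Y = upper_tri (s powi sum_list ds * u ^ length ds) c"
proof -
  define t where "t = inverse u"
  have "t \<noteq> 0" "u = inverse t" using assms(2) by (simp_all add: t_def)
  let ?w = "xy_inv_word ds"
  have "word_corner s t ?w \<noteq> 0"
    using word_corner_xy_inv_word[OF assms(1) \<open>t \<noteq> 0\<close>, of ds] assms(3) \<open>t \<noteq> 0\<close> \<open>u = inverse t\<close>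
    by auto
  then have "word_map ?w (upper_tri s 0) (upper_tri t (c / word_corner s t ?w))
      = upper_tri (s powi sum_list ds * u ^ length ds) c"
    by (simp add: word_map_upper_tri[OF assms(1) \<open>t \<noteq> 0\<close>] word_diag_xy_inv_word[OF assms(1)]
        \<open>u = inverse t\<close>)
  moreover have "upper_tri s 0 \<in> SL2C" "upper_tri t v \<in> SL2C" for v
    using assms(1) \<open>t \<noteq> 0\<close> by (simp_all add: SL2C_def det_upper_tri)
  ultimately show ?thesis by blast
qed

lemma word_map_surjective_xy_inv_word:
  assumes "ds \<noteq> []" and not_square: "\<nexists>e. e \<noteq> [] \<and> ds = e @ e"
  shows "word_map_surjective_SL2C (xy_inv_word ds)"
proof (rule word_map_surjective_if_hits_upper_tri)
  fix lam c :: complex assume "lam \<noteq> 0"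
  show "\<exists>X\<in>SL2C. \<exists>Y\<in>SL2C. word_map (xy_inv_word ds) X Y = upper_tri lam c"
  proof (cases "lam = -1 \<and> even (length ds)")
    case True
    then obtain n where L: "length ds = n + n" by (metis evenE mult_2)
    with assms(1) have "n > 0" by (cases n) auto
    have "\<exists>u. u \<noteq> 0 \<and> 2 powi sum_list ds * u ^ length ds = -1 \<and> corner_poly 2 u ds \<noteq> 0"
    proof (rule ccontr)
      assume "\<not> ?thesis"
      then have "ds = take n ds @ take n ds"
        by (intro square_if_corner_poly_vanishes[OF L \<open>n > 0\<close>]) blast
      moreover have "take n ds \<noteq> []" using L \<open>n > 0\<close> by (cases ds) auto
      ultimately show False using not_square by blast
    qed
    then show ?thesis using True xy_inv_word_hits_upper_tri[of 2] by fastforce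
  next
    case False
    then obtain u where "u ^ length ds = lam" "corner_poly 1 u ds \<noteq> 0"
      using exists_root_corner_poly_1_nonzero[OF assms(1) \<open>lam \<noteq> 0\<close>] by blast
    moreover have "u \<noteq> 0" using calculation(1) \<open>lam \<noteq> 0\<close> assms(1) by auto
    ultimately show ?thesis using xy_inv_word_hits_upper_tri[of 1 u ds c] by simp
  qed
qed

lemma xy_inv_word_concat: "xy_inv_word (concat dss) = concat (map xy_inv_word dss)"
  by (induction dss) (simp_all add: xy_inv_word_append, simp add: xy_inv_word_def)

lemma gen_pow_xy_eq_xy_inv_word:
  assumes "b < 0"
  shows "gen_pow True a @ gen_pow False b = xy_inv_word (a # replicate (nat (- b) - 1) 0)"
proof -
  have "xy_inv_word (replicate m 0) = replicate m (False, True)" for m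
    by (induction m) (simp_all add: xy_inv_word_def gen_pow_def)
  moreover have "nat (- b) = Suc (nat (- b) - 1)" using assms by simp
  then have "gen_pow False b = (False, True) # replicate (nat (- b) - 1) (False, True)"
    using assms by (simp add: gen_pow_def flip: replicate_Suc)
  ultimately show ?thesis
    using xy_inv_word_append[of "[a]" "replicate (nat (- b) - 1) 0"] by (simp add: xy_inv_word_def)
qed

definition y_exponent_sum :: "letter list \<Rightarrow> int" where
  "y_exponent_sum w = (\<Sum>l\<leftarrow>w. if fst l then 0 else if snd l then -1 else 1)"

lemma free_eq_y_exponent_sum:
  assumes "free_eq u v"
  shows "y_exponent_sum u = y_exponent_sum v"
proof -
  have step: "y_exponent_sum u = y_exponent_sum v" if "free_step u v" for u v
    using that by (induction rule: free_step.induct) (auto simp: y_exponent_sum_def)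
  from assms have "equivclp free_step u v" by (simp add: free_eq_def)
  then show ?thesis by (induction rule: equivclp_induct) (auto dest: step)
qed

lemma not_free_eq_Nil_xy_inv_word: "ds \<noteq> [] \<Longrightarrow> \<not> free_eq (xy_inv_word ds) []"
proof
  assume "ds \<noteq> []" "free_eq (xy_inv_word ds) []"
  have "y_exponent_sum (xy_inv_word ds) = - int (length ds)"
    by (induction ds) (auto simp: y_exponent_sum_def xy_inv_word_def gen_pow_def sum_list_replicate)
  with free_eq_y_exponent_sum[OF \<open>free_eq (xy_inv_word ds) []\<close>] \<open>ds \<noteq> []\<close> show False
    by (simp add: y_exponent_sum_def)
qed

theorem corollary7p5:
  fixes k :: nat and a b :: "nat \<Rightarrow> int"
  assumes "k \<ge> 1"
    and "\<forall>i\<in>{1..k}. a i \<noteq> 0"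
    and "\<forall>i\<in>{1..k}. b i \<noteq> 0"
    and "\<forall>i\<in>{1..k}. b i < 0"
  shows "word_map_surjective_SL2C (xy_word k a b)
         \<or> (\<exists>v. \<not> free_eq v [] \<and> free_eq (xy_word k a b) (v @ v))"
proof -
  \<comment> \<open>For b < 0, y^b = (x^0 y^-1)^|b|.\<close>
  define ds where "ds = concat (map (\<lambda>i. a i # replicate (nat (- b i) - 1) 0) [1..<k+1])"
  have w: "xy_word k a b = xy_inv_word ds"
    using assms(4) by (auto simp: xy_word_def ds_def xy_inv_word_concat gen_pow_xy_eq_xy_inv_word
        intro!: arg_cong[where f = concat])
  have "ds \<noteq> []" using \<open>k \<ge> 1\<close> by (auto simp: ds_def)
  show ?thesis
  proof (cases "\<exists>e. e \<noteq> [] \<and> ds = e @ e")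
    case True
    then obtain e where "e \<noteq> []" "ds = e @ e" by blast
    moreover from \<open>ds = e @ e\<close> have "free_eq (xy_word k a b) (xy_inv_word e @ xy_inv_word e)"
      by (simp add: w xy_inv_word_append free_eq_def)
    ultimately show ?thesis using not_free_eq_Nil_xy_inv_word by blast
  next
    case False
    then show ?thesis using word_map_surjective_xy_inv_word[OF \<open>ds \<noteq> []\<close>] by (simp add: w)
  qed
qed

end
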